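(* Let $G=(V,E)$ be a finite simple undirected graph, $n=|V|$, $G_0:=G$, and let $W_1,\dots,W_r$ be distinct subsets of $V$ such that for every $t\in\{1,\dots,r\}$, $W_t$ is a clique of $G_{t-1}$ with $|W_t|\ge2$ and $G_t:=G_{t-1}\mid W_t$. Let $F_0:=STAB(G)$ and $F_t:=\{x\in STAB(G)\mid x_{W_j}=1,\ j=1,\dots,t\}$. Suppose there is $k>0$ such that for all $t\in\{1,\dots,r\}$: (I) $|W_t|=k$ and the subgraph of $G_{t-1}$ induced by $\bigcup_{i=1}^tW_i$ is $k$-partite with vertex classes $V_t^1,\dots,V_t^k$; (II) $T_t:=(V_t,\mathcal W_t)$, with $V_t:=\bigcup_{i=1}^kV_t^i$ and $\mathcal W_t:=\{W_1,\dots,W_t\}$, is a strong hypertree; (III) for every $w\in V_t^0:=V\setminus V_t$ there exists $i\in\{1,\dots,k\}$ with $N_{G_{t-1}}(w)\cap V_t^i=\emptyset$. Then for all $t\in\{1,\dots,r\}$, the inequality $x_{W_t}\le1$ is facet defining for $F_{t-1}$.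
   Context: For a graph $G=(V,E)$, $\mathcal S(G)\subseteq\{0,1\}^V$ is the set of characteristic vectors of stable sets of $G$, and $STAB(G)=\mathrm{conv}\,\mathcal S(G)$. For $W\subseteq V$ and $x\in\mathbb R^V$, $x_W=\sum_{v\in W}x_v$. $N_H(u)$ is the neighborhood of $u$ in a graph $H$. The clique projection of a clique $W$ ($|W|\ge2$) of a graph $H=(V,E_H)$ is $H\mid W=(V,E_H\cup\{uv\notin E_H\mid u\ne v,\ W\subseteq N_H(u)\cup N_H(v)\})$. A hypergraph $(V_t,\mathcal W_t)$ with all hyperedges of size $k$ is a strong hypertree if either $\mathcal W_t=\{V_t\}$, or there is a vertex $v\in V_t$ incident to a hyperedge $W_i\in\mathcal W_t$ that shares exactly $k-1$ vertices with some other hyperedge, such that $(V_t\setminus\{v\},\mathcal W_t\setminus\{W_i\})$ is again a strong hypertree. An inequality is facet defining for a polytope $P$ if it is valid for $P$ and the face it defines has dimension $\dim P-1$. *)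

theory Defs
  imports "HOL-Analysis.Analysis"
begin

text \<open>Graphs: the vertex set is the finite type 'n (so V = UNIV, R^V = real^'n);
  edges are a symmetric irreflexive relation E.\<close>

definition simple_graph :: "('n \<times> 'n) set \<Rightarrow> bool" where
  "simple_graph E \<longleftrightarrow> sym E \<and> (\<forall>v. (v, v) \<notin> E)"

definition nbhd :: "('n \<times> 'n) set \<Rightarrow> 'n \<Rightarrow> 'n set" where
  "nbhd E u = {v. (u, v) \<in> E}"

definition stable_set :: "('n \<times> 'n) set \<Rightarrow> 'n set \<Rightarrow> bool" where
  "stable_set E S \<longleftrightarrow> (\<forall>u\<in>S. \<forall>v\<in>S. (u, v) \<notin> E)"

definition clique :: "('n \<times> 'n) set \<Rightarrow> 'n set \<Rightarrow> bool" where
  "clique E W \<longleftrightarrow> (\<forall>u\<in>W. \<forall>v\<in>W. u \<noteq> v \<longrightarrow> (u, v) \<in> E)"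

definition char_vec :: "'n::finite set \<Rightarrow> real ^ 'n" where
  "char_vec S = (\<chi> v. if v \<in> S then 1 else 0)"

definition STAB :: "('n::finite \<times> 'n) set \<Rightarrow> (real ^ 'n) set" where
  "STAB E = convex hull {char_vec S | S. stable_set E S}"

definition xsum :: "real ^ 'n \<Rightarrow> 'n::finite set \<Rightarrow> real" where
  "xsum x W = (\<Sum>v\<in>W. x $ v)"

definition clique_proj :: "('n \<times> 'n) set \<Rightarrow> 'n set \<Rightarrow> ('n \<times> 'n) set" where
  "clique_proj E W = E \<union> {(u, v). (u, v) \<notin> E \<and> u \<noteq> v \<and> W \<subseteq> nbhd E u \<union> nbhd E v}"

fun proj_seq :: "('n \<times> 'n) set \<Rightarrow> (nat \<Rightarrow> 'n set) \<Rightarrow> nat \<Rightarrow> ('n \<times> 'n) set" where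
  "proj_seq E W 0 = E"
| "proj_seq E W (Suc t) = clique_proj (proj_seq E W t) (W (Suc t))"

definition F_face :: "('n::finite \<times> 'n) set \<Rightarrow> (nat \<Rightarrow> 'n set) \<Rightarrow> nat \<Rightarrow> (real ^ 'n) set" where
  "F_face E W t = {x \<in> STAB E. \<forall>j\<in>{1..t}. xsum x (W j) = 1}"

definition k_partite_classes :: "('n \<times> 'n) set \<Rightarrow> 'n set \<Rightarrow> nat \<Rightarrow> (nat \<Rightarrow> 'n set) \<Rightarrow> bool" where
  "k_partite_classes E U k C \<longleftrightarrow>
     (\<Union>i\<in>{1..k}. C i) = U \<and>
     (\<forall>i\<in>{1..k}. \<forall>j\<in>{1..k}. i \<noteq> j \<longrightarrow> C i \<inter> C j = {}) \<and>
     (\<forall>i\<in>{1..k}. stable_set E (C i))"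

definition k_uniform_hypergraph :: "nat \<Rightarrow> 'n set \<Rightarrow> 'n set set \<Rightarrow> bool" where
  "k_uniform_hypergraph k Vt Ws \<longleftrightarrow> finite Vt \<and> (\<forall>W\<in>Ws. W \<subseteq> Vt \<and> card W = k)"

inductive strong_hypertree :: "nat \<Rightarrow> 'n set \<Rightarrow> 'n set set \<Rightarrow> bool" where
  base: "k_uniform_hypergraph k Vt {Vt} \<Longrightarrow> strong_hypertree k Vt {Vt}"
| step: "\<lbrakk> k_uniform_hypergraph k Vt Ws; v \<in> Vt; Wi \<in> Ws; v \<in> Wi;
           W' \<in> Ws; W' \<noteq> Wi; card (Wi \<inter> W') = k - 1;
           strong_hypertree k (Vt - {v}) (Ws - {Wi}) \<rbrakk>
         \<Longrightarrow> strong_hypertree k Vt Ws"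

definition facet_defining :: "(real ^ 'n::finite) set \<Rightarrow> real ^ 'n \<Rightarrow> real \<Rightarrow> bool" where
  "facet_defining P c b \<longleftrightarrow>
     (\<forall>x\<in>P. c \<bullet> x \<le> b) \<and> aff_dim {x \<in> P. c \<bullet> x = b} = aff_dim P - 1"

end

theory Submission
  imports Defs
begin

text \<open>A point of F_{t-1} is a convex combination of stable sets of G.  Inductively, each set of
  positive weight meets W_1, ..., W_{t-1} exactly once (it meets the clique W_j of G_{j-1} at most
  once, and the weighted mean is x_{W_j} = 1); hence it stays stable under the projections and
  meets the clique W_t of G_{t-1} at most once, which gives validity.

  Each class V_t^i is a stable set meeting every W_j exactly once, and so is V_t^i \<union> {w} for the
  class provided by (III) for w \<notin> V_t.  So the characteristic vectors of the k classes and the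
  unit vectors of the n - |V_t| outside vertices, which have disjoint supports, lie in the span of
  F_t; as a strong hypertree with t edges has k + t - 1 vertices, dim F_t \<ge> n - t.  Removing from
  a class its vertex in W_t - (W_1 \<union> ... \<union> W_{t-1}) gives a point of F_{t-1} outside F_t, so the
  dimension drops strictly along F_0 \<supseteq> F_1 \<supseteq> ...; starting from at most n and staying at
  least n - t, it drops by exactly one at each step.\<close>

lemma inner_char_vec: "char_vec A \<bullet> x = xsum x A"
proof -
  have "char_vec A \<bullet> x = (\<Sum>i\<in>UNIV. if i \<in> A then x $ i else 0)"
    unfolding inner_vec_def char_vec_def by (intro sum.cong) auto
  also have "\<dots> = sum (($) x) (UNIV \<inter> A)"
    by (rule sum.inter_restrict[symmetric]) simp
  finally show ?thesis
    by (simp add: xsum_def)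
qed

lemma xsum_char_vec: "xsum (char_vec S) A = real (card (S \<inter> A))"
  by (simp add: xsum_def char_vec_def sum.If_cases Int_commute)

lemma inner_char_vec_sum:
  "char_vec A \<bullet> (\<Sum>S\<in>\<S>. u S *\<^sub>R char_vec S) = (\<Sum>S\<in>\<S>. u S * real (card (S \<inter> A)))"
  by (simp add: inner_sum_right inner_char_vec xsum_char_vec)

lemma char_vec_empty [simp]: "char_vec {} = 0"
  by (simp add: char_vec_def vec_eq_iff)

lemma inj_char_vec: "inj char_vec"
  by (rule injI) (auto simp: char_vec_def vec_eq_iff split: if_splits; metis zero_neq_one)

lemma independent_char_vec_disjoint:
  fixes \<S> :: "'n::finite set set"
  assumes "disjoint \<S>" and "{} \<notin> \<S>"
  shows "independent (char_vec ` \<S>)"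
proof (rule pairwise_orthogonal_independent)
  show "pairwise orthogonal (char_vec ` \<S>)"
    using assms(1)
    by (auto simp: pairwise_def disjnt_def orthogonal_def inner_char_vec xsum_char_vec)
      (metis IntI empty_iff)
  show "0 \<notin> char_vec ` \<S>"
    using assms(2) inj_char_vec by (metis char_vec_empty image_iff injD)
qed

lemma card_le_dim_if_char_vec_in_span:
  fixes \<S> :: "'n::finite set set"
  assumes "disjoint \<S>" and "{} \<notin> \<S>" and "char_vec ` \<S> \<subseteq> span F"
  shows "card \<S> \<le> dim F"
proof -
  have "card (char_vec ` \<S>) \<le> dim (span F)"
    using independent_char_vec_disjoint[OF assms(1,2)] assms(3) by (rule independent_card_le_dim[rotated])
  moreover have "inj_on char_vec \<S>"
    using inj_char_vec by (rule inj_on_subset) simp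
  ultimately show ?thesis
    by (simp add: card_image)
qed

lemma dim_le_aff_dim:
  fixes S :: "'a::euclidean_space set"
  assumes "a \<in> S"
  shows "int (dim S) \<le> aff_dim S + 1"
proof -
  let ?D = "(\<lambda>x. x - a) ` S"
  have "S \<subseteq> span (insert a ?D)"
  proof
    fix x assume "x \<in> S"
    then have "(x - a) + a \<in> span (insert a ?D)"
      by (intro span_add span_base) auto
    then show "x \<in> span (insert a ?D)" by simp
  qed
  then have "dim S \<le> dim (span (insert a ?D))"
    by (rule dim_subset)
  also have "\<dots> \<le> dim ?D + 1"
    by (simp add: dim_insert)
  finally have "dim S \<le> dim ?D + 1" .
  moreover have "aff_dim S = int (dim ?D)"
    by (rule aff_dim_eq_dim_subtract) (simp add: assms hull_inc)
  ultimately show ?thesis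
    by linarith
qed

lemma weighted_mean_le_1:
  fixes u f :: "'a \<Rightarrow> real"
  assumes "\<forall>a\<in>A. 0 \<le> u a" and "sum u A = 1" and "\<forall>a\<in>A. 0 < u a \<longrightarrow> f a \<le> 1"
  shows "(\<Sum>a\<in>A. u a * f a) \<le> 1"
proof -
  have "(\<Sum>a\<in>A. u a * f a) \<le> sum u A"
  proof (rule sum_mono)
    fix a assume "a \<in> A"
    then consider "u a = 0" | "0 < u a" "f a \<le> 1"
      using assms(1,3) by force
    then show "u a * f a \<le> u a"
      by cases (simp_all add: mult_left_le)
  qed
  then show ?thesis
    using assms(2) by simp
qed

lemma weighted_mean_eq_1_imp_eq_1:
  fixes u f :: "'a \<Rightarrow> real"
  assumes "finite A" and "\<forall>a\<in>A. 0 \<le> u a" and "sum u A = 1" and "\<forall>a\<in>A. 0 < u a \<longrightarrow> f a \<le> 1"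
    and "(\<Sum>a\<in>A. u a * f a) = 1" and "a \<in> A" and "0 < u a"
  shows "f a = 1"
proof -
  have nonneg: "\<forall>b\<in>A. 0 \<le> u b * (1 - f b)"
  proof
    fix b assume "b \<in> A"
    then consider "u b = 0" | "0 < u b" "f b \<le> 1"
      using assms(2,4) by force
    then show "0 \<le> u b * (1 - f b)"
      by cases simp_all
  qed
  have "(\<Sum>b\<in>A. u b * (1 - f b)) = sum u A - (\<Sum>b\<in>A. u b * f b)"
    by (simp add: right_diff_distrib sum_subtractf)
  then have "(\<Sum>b\<in>A. u b * (1 - f b)) = 0"
    using assms(3,5) by simp
  then have "\<forall>b\<in>A. u b * (1 - f b) = 0"
    using sum_nonneg_eq_0_iff[OF assms(1), of "\<lambda>b. u b * (1 - f b)"] nonneg by simp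
  then have "u a * (1 - f a) = 0"
    using assms(6) by blast
  then show ?thesis
    using assms(7) by simp
qed

lemma proj_seq_mono: "m \<le> m' \<Longrightarrow> proj_seq E W m \<subseteq> proj_seq E W m'"
  by (induction m') (auto simp: le_Suc_eq clique_proj_def)

lemma simple_graph_proj_seq: "simple_graph E \<Longrightarrow> simple_graph (proj_seq E W m)"
  by (induction m) (auto simp: simple_graph_def clique_proj_def sym_def)

lemma stable_set_antimono: "stable_set H S \<Longrightarrow> H' \<subseteq> H \<Longrightarrow> T \<subseteq> S \<Longrightarrow> stable_set H' T"
  unfolding stable_set_def by blast

lemma clique_mono: "clique H S \<Longrightarrow> H \<subseteq> H' \<Longrightarrow> clique H' S"
  unfolding clique_def by blast

lemma card_Int_stable_clique_le_1:
  fixes S :: "'n::finite set"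
  assumes "stable_set H S" and "clique H W"
  shows "card (S \<inter> W) \<le> 1"
proof -
  have "\<forall>a\<in>S \<inter> W. \<forall>b\<in>S \<inter> W. a = b"
    using assms unfolding stable_set_def clique_def by blast
  then show ?thesis
    using card_le_Suc0_iff_eq[of "S \<inter> W"] by simp
qed

text \<open>The vertex of \<open>S \<inter> W\<close> is adjacent to no vertex of \<open>S\<close>, so no projected edge joins two
  vertices of \<open>S\<close>.\<close>

lemma stable_set_clique_proj:
  assumes "stable_set H S" and "card (S \<inter> W) = 1"
  shows "stable_set (clique_proj H W) S"
proof -
  obtain w where "S \<inter> W = {w}"
    using assms(2) by (meson card_1_singletonE)
  then show ?thesis
    using assms(1) unfolding stable_set_def clique_proj_def nbhd_def by blast
qed

lemma stable_set_proj_seq: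
  assumes "stable_set E S" and "\<forall>j\<in>{1..m}. card (S \<inter> W j) = 1"
  shows "stable_set (proj_seq E W m) S"
  using assms(2)
proof (induction m)
  case (Suc m)
  then show ?case
    by (simp add: stable_set_clique_proj)
qed (simp add: assms(1))

lemma strong_hypertree_card:
  assumes "strong_hypertree k Vt Ws"
  shows "card Vt + 1 = k + card Ws"
proof -
  from assms have "finite Ws \<and> card Vt + 1 = k + card Ws"
  proof (induction rule: strong_hypertree.induct)
    case (base k Vt)
    then show ?case by (simp add: k_uniform_hypergraph_def)
  next
    case (step k Vt Ws v Wi)
    then have "finite Vt" "finite Ws"
      by (auto simp: k_uniform_hypergraph_def)
    with step show ?case
      by (metis Suc_eq_plus1 add_Suc_right card_Suc_Diff1)
  qed
  then show ?thesis ..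
qed

lemma squeezed_descent_step:
  fixes a :: "nat \<Rightarrow> int"
  assumes "a 0 \<le> N"
    and descent: "\<And>t. t \<in> {1..r} \<Longrightarrow> a t < a (t - 1)"
    and lower: "\<And>t. t \<in> {1..r} \<Longrightarrow> N - int t \<le> a t"
    and t: "t \<in> {1..r}"
  shows "a t = a (t - 1) - 1"
proof -
  have upper: "a s \<le> N - int s" if "s \<le> r" for s
    using that
  proof (induction s)
    case (Suc s)
    then have "a (Suc s) < a s"
      using descent[of "Suc s"] by simp
    with Suc show ?case by simp
  qed (simp add: assms(1))
  have "t - 1 \<le> r" and "int (t - 1) = int t - 1"
    using t by auto
  then show ?thesis
    using upper[of "t - 1"] descent[OF t] lower[OF t] by linarith
qed

lemma STAB_convex_combination:
  fixes E :: "('n::finite \<times> 'n) set"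
  assumes "x \<in> STAB E"
  obtains u where "\<forall>S. stable_set E S \<longrightarrow> 0 \<le> u S" and "(\<Sum>S | stable_set E S. u S) = 1"
    and "x = (\<Sum>S | stable_set E S. u S *\<^sub>R char_vec S)"
proof -
  let ?\<S> = "{S::'n set. stable_set E S}"
  have inj: "inj_on char_vec ?\<S>"
    using inj_char_vec by (rule inj_on_subset) simp
  have "{char_vec S | S. stable_set E S} = char_vec ` ?\<S>"
    by auto
  with assms obtain v where v: "\<forall>y\<in>char_vec ` ?\<S>. 0 \<le> v y" "sum v (char_vec ` ?\<S>) = 1"
      "(\<Sum>y\<in>char_vec ` ?\<S>. v y *\<^sub>R y) = x"
    unfolding STAB_def by (auto simp: convex_hull_finite)
  show ?thesis
  proof
    show "\<forall>S. stable_set E S \<longrightarrow> 0 \<le> (v \<circ> char_vec) S"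
      using v(1) by simp
    show "(\<Sum>S\<in>?\<S>. (v \<circ> char_vec) S) = 1"
      using v(2) sum.reindex[OF inj, of v] by simp
    show "x = (\<Sum>S\<in>?\<S>. (v \<circ> char_vec) S *\<^sub>R char_vec S)"
      using v(3) sum.reindex[OF inj, of "\<lambda>y. v y *\<^sub>R y"] by simp
  qed
qed

lemma F_face_eq: "F_face E W m = STAB E \<inter> (\<Inter>j\<in>{1..m}. {x. char_vec (W j) \<bullet> x = 1})"
  by (auto simp: F_face_def inner_char_vec)

lemma convex_F_face: "convex (F_face E W m)"
  unfolding F_face_eq STAB_def
  by (intro convex_Int convex_INT convex_convex_hull) (simp add: convex_hyperplane)

lemma F_face_step:
  assumes "1 \<le> t"
  shows "F_face E W t = F_face E W (t - 1) \<inter> {x. char_vec (W t) \<bullet> x = 1}"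
proof -
  have "{1..t} = insert t {1..t - 1}"
    using assms by auto
  then show ?thesis
    unfolding F_face_eq by auto
qed

lemma char_vec_in_F_face:
  assumes "stable_set E S" and "\<forall>j\<in>{1..m}. card (S \<inter> W j) = 1"
  shows "char_vec S \<in> F_face E W m"
  using assms by (auto simp: F_face_def STAB_def xsum_char_vec intro!: hull_inc)

lemma F_face_support_meets_cliques_once:
  fixes E :: "('n::finite \<times> 'n) set"
  assumes cl: "\<forall>j\<in>{1..m}. clique (proj_seq E W (j - 1)) (W j)"
    and u: "\<forall>S. stable_set E S \<longrightarrow> 0 \<le> u S" "(\<Sum>S | stable_set E S. u S) = 1"
    and x: "(\<Sum>S | stable_set E S. u S *\<^sub>R char_vec S) \<in> F_face E W m"
    and j: "j \<in> {1..m}"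
    and S: "stable_set E S" "0 < u S"
  shows "card (S \<inter> W j) = 1"
  using j S
proof (induction j arbitrary: S rule: less_induct)
  case (less j)
  have le_1: "real (card (S' \<inter> W j)) \<le> 1" if "stable_set E S'" "0 < u S'" for S'
  proof -
    have "stable_set (proj_seq E W (j - 1)) S'"
      using that less.IH less.prems(1) by (intro stable_set_proj_seq) auto
    then show ?thesis
      using card_Int_stable_clique_le_1 cl less.prems(1) by fastforce
  qed
  have "(\<Sum>S | stable_set E S. u S * real (card (S \<inter> W j))) = 1"
    using x less.prems(1) by (auto simp: F_face_eq inner_char_vec_sum)
  then show ?case
    using weighted_mean_eq_1_imp_eq_1[of "{S. stable_set E S}" u "\<lambda>S. real (card (S \<inter> W j))"]
      u le_1 less.prems by simp
qed

lemma F_face_char_vec_le_1: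
  fixes E :: "('n::finite \<times> 'n) set"
  assumes cl: "\<forall>j\<in>{1..t}. clique (proj_seq E W (j - 1)) (W j)"
    and t: "1 \<le> t" and x: "x \<in> F_face E W (t - 1)"
  shows "char_vec (W t) \<bullet> x \<le> 1"
proof -
  obtain u where u: "\<forall>S. stable_set E S \<longrightarrow> 0 \<le> u S" "(\<Sum>S | stable_set E S. u S) = 1"
      and x_eq: "x = (\<Sum>S | stable_set E S. u S *\<^sub>R char_vec S)"
    using x by (auto simp: F_face_def elim: STAB_convex_combination)
  have le_1: "real (card (S \<inter> W t)) \<le> 1" if "stable_set E S" "0 < u S" for S
  proof -
    have "\<forall>j\<in>{1..t - 1}. clique (proj_seq E W (j - 1)) (W j)"
      using cl by auto
    then have "\<forall>j\<in>{1..t - 1}. card (S \<inter> W j) = 1"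
      using F_face_support_meets_cliques_once u x x_eq that by blast
    then have "stable_set (proj_seq E W (t - 1)) S"
      by (rule stable_set_proj_seq[OF that(1)])
    then show ?thesis
      using card_Int_stable_clique_le_1 cl t by fastforce
  qed
  show ?thesis
    unfolding x_eq inner_char_vec_sum
    using weighted_mean_le_1[of "{S. stable_set E S}" u "\<lambda>S. real (card (S \<inter> W t))"] u le_1
    by simp
qed

lemma stable_set_partite_class:
  assumes "k_partite_classes (proj_seq E W m) U k Ct" and "i \<in> {1..k}"
  shows "stable_set E (Ct i)"
  using assms proj_seq_mono[of 0 m E W]
  by (auto simp: k_partite_classes_def intro: stable_set_antimono)

text \<open>Pigeonhole: the \<open>k\<close> classes cover the \<open>k\<close>-clique \<open>W j\<close> and, being stable in G_{t-1},
  each meets it at most once.\<close>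

lemma class_meets_clique_once:
  fixes E :: "('n::finite \<times> 'n) set"
  assumes cl: "\<forall>j\<in>{1..t}. clique (proj_seq E W (j - 1)) (W j)"
    and kp: "k_partite_classes (proj_seq E W (t - 1)) (\<Union>j\<in>{1..t}. W j) k Ct"
    and cW: "\<forall>j\<in>{1..t}. card (W j) = k"
    and i: "i \<in> {1..k}" and j: "j \<in> {1..t}"
  shows "card (Ct i \<inter> W j) = 1"
proof -
  let ?H = "proj_seq E W (t - 1)"
  have "proj_seq E W (j - 1) \<subseteq> ?H"
    using j by (intro proj_seq_mono) auto
  then have clH: "clique ?H (W j)"
    using cl j clique_mono by blast
  have le_1: "card (Ct i' \<inter> W j) \<le> 1" if "i' \<in> {1..k}" for i'
    using kp that card_Int_stable_clique_le_1[OF _ clH] by (simp add: k_partite_classes_def)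
  have "W j \<subseteq> (\<Union>i\<in>{1..k}. Ct i)"
    using kp j by (auto simp: k_partite_classes_def)
  then have "W j = (\<Union>i'\<in>{1..k}. Ct i' \<inter> W j)"
    by blast
  then have "k \<le> (\<Sum>i'\<in>{1..k}. card (Ct i' \<inter> W j))"
    using cW j card_UN_le[of "{1..k}" "\<lambda>i'. Ct i' \<inter> W j"] by simp
  also have "\<dots> = card (Ct i \<inter> W j) + (\<Sum>i'\<in>{1..k} - {i}. card (Ct i' \<inter> W j))"
    using i by (simp add: sum.remove)
  also have "\<dots> \<le> card (Ct i \<inter> W j) + (k - 1)"
    using sum_mono[of "{1..k} - {i}" "\<lambda>i'. card (Ct i' \<inter> W j)" "\<lambda>_. 1"] le_1 i
    by (intro add_left_mono) simp
  finally have "k \<le> card (Ct i \<inter> W j) + (k - 1)" .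
  moreover have "1 \<le> k"
    using i by simp
  ultimately show ?thesis
    using le_1[OF i] by linarith
qed

lemma char_vec_class_in_F_face:
  fixes E :: "('n::finite \<times> 'n) set"
  assumes cl: "\<forall>j\<in>{1..t}. clique (proj_seq E W (j - 1)) (W j)"
    and kp: "k_partite_classes (proj_seq E W (t - 1)) (\<Union>j\<in>{1..t}. W j) k Ct"
    and cW: "\<forall>j\<in>{1..t}. card (W j) = k"
    and i: "i \<in> {1..k}"
  shows "char_vec (Ct i) \<in> F_face E W t"
proof (rule char_vec_in_F_face)
  show "stable_set E (Ct i)"
    using kp i by (rule stable_set_partite_class)
  show "\<forall>j\<in>{1..t}. card (Ct i \<inter> W j) = 1"
    using class_meets_clique_once[OF cl kp cW i] by blast
qed

lemma char_vec_singleton_in_span_F_face: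
  fixes E :: "('n::finite \<times> 'n) set"
  assumes graph: "simple_graph E"
    and cl: "\<forall>j\<in>{1..t}. clique (proj_seq E W (j - 1)) (W j)"
    and kp: "k_partite_classes (proj_seq E W (t - 1)) (\<Union>j\<in>{1..t}. W j) k Ct"
    and cW: "\<forall>j\<in>{1..t}. card (W j) = k"
    and i: "i \<in> {1..k}" and w: "w \<notin> (\<Union>j\<in>{1..t}. W j)"
    and nb: "nbhd (proj_seq E W (t - 1)) w \<inter> Ct i = {}"
  shows "char_vec {w} \<in> span (F_face E W t)"
proof -
  let ?H = "proj_seq E W (t - 1)"
  have Ct_in_F: "char_vec (Ct i) \<in> F_face E W t"
    using char_vec_class_in_F_face[OF cl kp cW i] .
  have w_notin: "w \<notin> Ct i"
    using w kp i by (auto simp: k_partite_classes_def)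
  have "simple_graph ?H"
    using graph by (rule simple_graph_proj_seq)
  then have "stable_set ?H (insert w (Ct i))"
    using kp i nb unfolding stable_set_def k_partite_classes_def simple_graph_def nbhd_def
    by (auto dest: symD)
  then have "stable_set E (insert w (Ct i))"
    using proj_seq_mono[of 0 "t - 1" E W] by (auto intro: stable_set_antimono)
  moreover have "\<forall>j\<in>{1..t}. card (insert w (Ct i) \<inter> W j) = 1"
    using class_meets_clique_once[OF cl kp cW i] w by auto
  ultimately have "char_vec (insert w (Ct i)) \<in> F_face E W t"
    by (rule char_vec_in_F_face)
  moreover have "char_vec {w} = char_vec (insert w (Ct i)) - char_vec (Ct i)"
    using w_notin by (auto simp: char_vec_def vec_eq_iff)
  ultimately show ?thesis
    using Ct_in_F by (simp add: span_diff span_base)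
qed

lemma aff_dim_F_face_lower_bound:
  fixes E :: "('n::finite \<times> 'n) set"
  assumes graph: "simple_graph E"
    and cl: "\<forall>j\<in>{1..t}. clique (proj_seq E W (j - 1)) (W j)"
    and kp: "k_partite_classes (proj_seq E W (t - 1)) (\<Union>j\<in>{1..t}. W j) k Ct"
    and cW: "\<forall>j\<in>{1..t}. card (W j) = k"
    and III: "\<forall>w \<in> UNIV - (\<Union>i\<in>{1..k}. Ct i).
                \<exists>i\<in>{1..k}. nbhd (proj_seq E W (t - 1)) w \<inter> Ct i = {}"
    and t: "1 \<le> t" and k: "0 < k"
  shows "int (k + card (- (\<Union>j\<in>{1..t}. W j))) \<le> aff_dim (F_face E W t) + 1"
proof -
  let ?U = "\<Union>j\<in>{1..t}. W j"
  have U_eq: "(\<Union>i\<in>{1..k}. Ct i) = ?U"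
    and disj: "\<And>i i'. i \<in> {1..k} \<Longrightarrow> i' \<in> {1..k} \<Longrightarrow> i \<noteq> i' \<Longrightarrow> Ct i \<inter> Ct i' = {}"
    using kp by (auto simp: k_partite_classes_def)
  have Ct_in_F: "char_vec (Ct i) \<in> F_face E W t" if "i \<in> {1..k}" for i
    using char_vec_class_in_F_face[OF cl kp cW that] .
  have Ct_ne: "Ct i \<noteq> {}" if "i \<in> {1..k}" for i
    using class_meets_clique_once[OF cl kp cW that, of 1] t by auto
  define \<S> where "\<S> = Ct ` {1..k} \<union> (\<lambda>w. {w}) ` (- ?U)"
  have "card \<S> \<le> dim (F_face E W t)"
  proof (rule card_le_dim_if_char_vec_in_span)
    show "disjoint \<S>"
      unfolding \<S>_def disjoint_def using disj U_eq by fastforce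
    show "{} \<notin> \<S>"
      unfolding \<S>_def using Ct_ne by (auto dest: sym)
    have "char_vec {w} \<in> span (F_face E W t)" if "w \<notin> ?U" for w
      using III that U_eq char_vec_singleton_in_span_F_face[OF graph cl kp cW _ that] by blast
    then show "char_vec ` \<S> \<subseteq> span (F_face E W t)"
      unfolding \<S>_def using Ct_in_F by (auto intro: span_base)
  qed
  moreover have "card \<S> = k + card (- ?U)"
  proof -
    have "inj_on Ct {1..k}"
      using disj Ct_ne by (fastforce intro: inj_onI)
    moreover have "Ct i \<noteq> {w}" if "i \<in> {1..k}" "w \<notin> ?U" for i w
      using that U_eq by blast
    then have "Ct ` {1..k} \<inter> (\<lambda>w. {w}) ` (- ?U) = {}"
      by blast
    ultimately show ?thesis
      unfolding \<S>_def by (simp add: card_image card_Un_disjoint)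
  qed
  moreover have "int (dim (F_face E W t)) \<le> aff_dim (F_face E W t) + 1"
    using Ct_in_F[of 1] k by (intro dim_le_aff_dim) auto
  ultimately show ?thesis
    by linarith
qed

lemma F_face_point_avoiding_clique:
  fixes E :: "('n::finite \<times> 'n) set"
  assumes cl: "\<forall>j\<in>{1..t}. clique (proj_seq E W (j - 1)) (W j)"
    and kp: "k_partite_classes (proj_seq E W (t - 1)) (\<Union>j\<in>{1..t}. W j) k Ct"
    and cW: "\<forall>j\<in>{1..t}. card (W j) = k"
    and t: "1 \<le> t" and v: "v \<in> W t" "v \<notin> (\<Union>j\<in>{1..t - 1}. W j)"
  shows "\<exists>x\<in>F_face E W (t - 1). char_vec (W t) \<bullet> x = 0"
proof -
  have "v \<in> (\<Union>j\<in>{1..t}. W j)"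
    using v(1) t by auto
  also have "\<dots> = (\<Union>i\<in>{1..k}. Ct i)"
    using kp by (simp add: k_partite_classes_def)
  finally obtain i where i: "i \<in> {1..k}" "v \<in> Ct i"
    by blast
  note meets = class_meets_clique_once[OF cl kp cW i(1)]
  have "card (Ct i \<inter> W t) = 1"
    using meets t by simp
  then obtain y where "Ct i \<inter> W t = {y}"
    by (rule card_1_singletonE)
  moreover have "v \<in> Ct i \<inter> W t"
    using i(2) v(1) by blast
  ultimately have "Ct i \<inter> W t = {v}"
    by simp
  then have "(Ct i - {v}) \<inter> W t = {}"
    by blast
  then have "char_vec (W t) \<bullet> char_vec (Ct i - {v}) = 0"
    by (simp add: inner_char_vec xsum_char_vec)
  moreover have "char_vec (Ct i - {v}) \<in> F_face E W (t - 1)"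
  proof (rule char_vec_in_F_face)
    show "stable_set E (Ct i - {v})"
      using stable_set_partite_class[OF kp i(1)] by (rule stable_set_antimono) auto
    show "\<forall>j\<in>{1..t - 1}. card ((Ct i - {v}) \<inter> W j) = 1"
    proof
      fix j assume j: "j \<in> {1..t - 1}"
      then have "j \<in> {1..t}"
        by auto
      then have "card (Ct i \<inter> W j) = 1"
        by (rule meets)
      moreover have "(Ct i - {v}) \<inter> W j = Ct i \<inter> W j"
        using j v(2) by blast
      ultimately show "card ((Ct i - {v}) \<inter> W j) = 1"
        by (simp only:)
    qed
  qed
  ultimately show ?thesis
    by blast
qed

locale clique_projection_sequence =
  fixes E :: "('n::finite \<times> 'n) set"
    and W :: "nat \<Rightarrow> 'n set"
    and r k :: nat
    and C :: "nat \<Rightarrow> nat \<Rightarrow> 'n set"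
  assumes graph: "simple_graph E"
    and distinct: "inj_on W {1..r}"
    and cliques: "\<forall>t\<in>{1..r}. clique (proj_seq E W (t - 1)) (W t) \<and> card (W t) \<ge> 2"
    and kpos: "k > 0"
    and I: "\<forall>t\<in>{1..r}. card (W t) = k \<and>
              k_partite_classes (proj_seq E W (t - 1)) (\<Union>i\<in>{1..t}. W i) k (C t)"
    and II: "\<forall>t\<in>{1..r}. strong_hypertree k (\<Union>i\<in>{1..k}. C t i) (W ` {1..t})"
    and III: "\<forall>t\<in>{1..r}. \<forall>w \<in> UNIV - (\<Union>i\<in>{1..k}. C t i).
                \<exists>i\<in>{1..k}. nbhd (proj_seq E W (t - 1)) w \<inter> C t i = {}"
begin

lemma cliques_upto: "t \<le> r \<Longrightarrow> \<forall>j\<in>{1..t}. clique (proj_seq E W (j - 1)) (W j)"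
  using cliques by auto

lemma card_cliques_upto: "t \<le> r \<Longrightarrow> \<forall>j\<in>{1..t}. card (W j) = k"
  using I by auto

lemma partite_classes: "t \<in> {1..r} \<Longrightarrow> k_partite_classes (proj_seq E W (t - 1)) (\<Union>j\<in>{1..t}. W j) k (C t)"
  using I by blast

lemma card_Union_cliques:
  assumes t: "t \<in> {1..r}"
  shows "card (\<Union>j\<in>{1..t}. W j) + 1 = k + t"
proof -
  have "(\<Union>i\<in>{1..k}. C t i) = (\<Union>j\<in>{1..t}. W j)"
    using partite_classes[OF t] by (simp add: k_partite_classes_def)
  moreover have "strong_hypertree k (\<Union>i\<in>{1..k}. C t i) (W ` {1..t})"
    using II t by blast
  ultimately have "strong_hypertree k (\<Union>j\<in>{1..t}. W j) (W ` {1..t})"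
    by simp
  moreover have "inj_on W {1..t}"
    using distinct t by (auto intro: inj_on_subset)
  ultimately show ?thesis
    using strong_hypertree_card by (fastforce simp: card_image)
qed

lemma exists_new_vertex:
  assumes t: "t \<in> {1..r}"
  shows "\<exists>v\<in>W t. v \<notin> (\<Union>j\<in>{1..t - 1}. W j)"
proof -
  have "card (\<Union>j\<in>{1..t - 1}. W j) < card (\<Union>j\<in>{1..t}. W j)"
  proof (cases "t = 1")
    case True
    then show ?thesis
      using card_Union_cliques[OF t] kpos by simp
  next
    case False
    then have "t - 1 \<in> {1..r}"
      using t by auto
    then show ?thesis
      using card_Union_cliques[OF t] card_Union_cliques[of "t - 1"] t by auto
  qed
  moreover have "{1..t} = insert t {1..t - 1}"
    using t by auto
  ultimately have "\<not> W t \<subseteq> (\<Union>j\<in>{1..t - 1}. W j)"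
    by (metis UN_insert Un_absorb1 less_irrefl)
  then show ?thesis
    by blast
qed

lemma F_face_valid: "t \<in> {1..r} \<Longrightarrow> x \<in> F_face E W (t - 1) \<Longrightarrow> char_vec (W t) \<bullet> x \<le> 1"
  by (intro F_face_char_vec_le_1[OF cliques_upto]) auto

lemma aff_dim_F_face_ge:
  assumes t: "t \<in> {1..r}"
  shows "int CARD('n) - int t \<le> aff_dim (F_face E W t)"
proof -
  let ?U = "\<Union>j\<in>{1..t}. W j"
  have "int (k + card (- ?U)) \<le> aff_dim (F_face E W t) + 1"
    using t III kpos
    by (intro aff_dim_F_face_lower_bound[OF graph cliques_upto partite_classes card_cliques_upto]) auto
  moreover have "card (- ?U) = CARD('n) - card ?U" and "card ?U \<le> CARD('n)"
    by (simp_all add: Compl_eq_Diff_UNIV card_Diff_subset card_mono)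
  ultimately show ?thesis
    using card_Union_cliques[OF t] by linarith
qed

lemma aff_dim_F_face_drop:
  assumes t: "t \<in> {1..r}"
  shows "aff_dim (F_face E W t) < aff_dim (F_face E W (t - 1))"
proof -
  have t1: "1 \<le> t"
    using t by simp
  obtain x where x: "x \<in> F_face E W (t - 1)" "char_vec (W t) \<bullet> x = 0"
    using exists_new_vertex[OF t] t
      F_face_point_avoiding_clique[OF cliques_upto partite_classes card_cliques_upto t1] by force
  have "F_face E W t face_of F_face E W (t - 1)"
    unfolding F_face_step[OF t1] using F_face_valid[OF t]
    by (intro face_of_Int_supporting_hyperplane_le convex_F_face) blast
  moreover have "F_face E W t \<noteq> F_face E W (t - 1)"
  proof
    assume "F_face E W t = F_face E W (t - 1)"
    then have "x \<in> F_face E W t"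
      using x(1) by simp
    then have "char_vec (W t) \<bullet> x = 1"
      unfolding F_face_step[OF t1] by simp
    then show False
      using x(2) by simp
  qed
  ultimately show ?thesis
    using face_of_aff_dim_lt convex_F_face by blast
qed

lemma facet_defining_F_face:
  assumes t: "t \<in> {1..r}"
  shows "facet_defining (F_face E W (t - 1)) (char_vec (W t)) 1"
proof -
  have "aff_dim (F_face E W t) = aff_dim (F_face E W (t - 1)) - 1"
    using squeezed_descent_step[of "\<lambda>t. aff_dim (F_face E W t)" "int CARD('n)" r t]
      aff_dim_le_DIM[of "F_face E W 0"] aff_dim_F_face_drop aff_dim_F_face_ge t by simp
  moreover have "{x \<in> F_face E W (t - 1). char_vec (W t) \<bullet> x = 1} = F_face E W t"
    using F_face_step t by auto
  ultimately show ?thesis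
    using F_face_valid t by (simp add: facet_defining_def)
qed

end

theorem theorem2:
  fixes E :: "('n::finite \<times> 'n) set"
    and W :: "nat \<Rightarrow> 'n set"
    and r k :: nat
    and C :: "nat \<Rightarrow> nat \<Rightarrow> 'n set"
  assumes graph: "simple_graph E"
    and distinct: "inj_on W {1..r}"
    and cliques: "\<forall>t\<in>{1..r}. clique (proj_seq E W (t - 1)) (W t) \<and> card (W t) \<ge> 2"
    and kpos: "k > 0"
    and I: "\<forall>t\<in>{1..r}. card (W t) = k \<and>
              k_partite_classes (proj_seq E W (t - 1)) (\<Union>i\<in>{1..t}. W i) k (C t)"
    and II: "\<forall>t\<in>{1..r}. strong_hypertree k (\<Union>i\<in>{1..k}. C t i) (W ` {1..t})"
    and III: "\<forall>t\<in>{1..r}. \<forall>w \<in> UNIV - (\<Union>i\<in>{1..k}. C t i).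
                \<exists>i\<in>{1..k}. nbhd (proj_seq E W (t - 1)) w \<inter> C t i = {}"
  shows "\<forall>t\<in>{1..r}. facet_defining (F_face E W (t - 1)) (char_vec (W t)) 1"
proof -
  interpret clique_projection_sequence E W r k C
    using assms by (unfold_locales; blast)
  show ?thesis
    using facet_defining_F_face by blast
qed

end
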